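(* If $I\subseteq\Bbbk[x_0,\dots,x_n]$ is a saturated Borel ideal and $I'$ is any expansion of $I$, then $P_{I'}=1+P_I$.
   Context: $\Bbbk$ is an algebraically closed field; $P_J$ denotes the Hilbert polynomial of $\Bbbk[x_0,\dots,x_n]/J$. A monomial ideal $I$ is Borel if for every monomial $m\in I$, every $x_j\mid m$ and every $i<j$, $mx_i/x_j\in I$; it is saturated if $(I:\langle x_0,\dots,x_n\rangle^\infty)=I$. For a monomial $g$, $\max g$ is the largest $j$ with $x_j\mid g$. A minimal monomial generator $g$ of a saturated Borel ideal $I$ is expandable if the set $\{gx_{i+1}/x_i: x_i\mid g,\ 0\le i<n-1\}$ contains no minimal monomial generator of $I$; the expansion of $I$ at $g$ is the ideal $I'$ generated by all monomials of $I$ not divisible by $g$ together with the monomials $gx_j$ for $\max g\le j\le n-1$. (The generator $1$ of the unit ideal is vacuously expandable, with expansion $\langle x_0,\dots,x_{n-1}\rangle$.) *)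

theory Defs
  imports Main "HOL-Computational_Algebra.Polynomial"
begin

text \<open>Monomials of k[x_0,...,x_n] are exponent vectors a :: nat => nat with a i = 0 for i > n.
  Monomial ideals are represented by their sets of monomials.\<close>

definition monomials :: "nat \<Rightarrow> (nat \<Rightarrow> nat) set" where
  "monomials n = {a. \<forall>i>n. a i = 0}"

definition mdeg :: "nat \<Rightarrow> (nat \<Rightarrow> nat) \<Rightarrow> nat" where
  "mdeg n a = (\<Sum>i\<le>n. a i)"

definition var :: "nat \<Rightarrow> (nat \<Rightarrow> nat)" where
  "var i = (\<lambda>j. if j = i then 1 else 0)"

definition mdvd :: "(nat \<Rightarrow> nat) \<Rightarrow> (nat \<Rightarrow> nat) \<Rightarrow> bool" where
  "mdvd a b \<longleftrightarrow> (\<forall>i. a i \<le> b i)"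

definition monomial_ideal :: "nat \<Rightarrow> (nat \<Rightarrow> nat) set \<Rightarrow> bool" where
  "monomial_ideal n I \<longleftrightarrow> I \<subseteq> monomials n \<and>
     (\<forall>a\<in>I. \<forall>b\<in>monomials n. (\<lambda>i. a i + b i) \<in> I)"

definition mgen :: "nat \<Rightarrow> (nat \<Rightarrow> nat) set \<Rightarrow> (nat \<Rightarrow> nat) set" where
  "mgen n S = {a \<in> monomials n. \<exists>s\<in>S. mdvd s a}"

definition min_gens :: "(nat \<Rightarrow> nat) set \<Rightarrow> (nat \<Rightarrow> nat) set" where
  "min_gens I = {g \<in> I. \<forall>h\<in>I. mdvd h g \<longrightarrow> h = g}"

definition borel :: "nat \<Rightarrow> (nat \<Rightarrow> nat) set \<Rightarrow> bool" where
  "borel n I \<longleftrightarrow> (\<forall>m\<in>I. \<forall>j\<le>n. \<forall>i<j. 0 < m j \<longrightarrow> (\<lambda>k. m k - var j k + var i k) \<in> I)"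

text \<open>(I : <x_0,...,x_n>^\<infinity>) = I, tested on monomials (the saturation of a monomial ideal
  is monomial): f lies in the saturation iff f * <x_0..x_n>^k \<subseteq> I for some k.\<close>
definition saturated :: "nat \<Rightarrow> (nat \<Rightarrow> nat) set \<Rightarrow> bool" where
  "saturated n I \<longleftrightarrow> (\<forall>f\<in>monomials n.
      (\<exists>k. \<forall>u\<in>monomials n. mdeg n u = k \<longrightarrow> (\<lambda>i. f i + u i) \<in> I) \<longrightarrow> f \<in> I)"

text \<open>max g: largest j with x_j dividing g (0 for g = 1, matching the unit-ideal convention)\<close>
definition maxvar :: "nat \<Rightarrow> (nat \<Rightarrow> nat) \<Rightarrow> nat" where
  "maxvar n g = Max ({j. j \<le> n \<and> 0 < g j} \<union> {0})"

definition expandable :: "nat \<Rightarrow> (nat \<Rightarrow> nat) set \<Rightarrow> (nat \<Rightarrow> nat) \<Rightarrow> bool" where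
  "expandable n I g \<longleftrightarrow> g \<in> min_gens I \<and>
     (\<forall>i. 0 < g i \<and> i + 1 < n \<longrightarrow> (\<lambda>k. g k - var i k + var (i + 1) k) \<notin> min_gens I)"

definition expansion :: "nat \<Rightarrow> (nat \<Rightarrow> nat) set \<Rightarrow> (nat \<Rightarrow> nat) \<Rightarrow> (nat \<Rightarrow> nat) set" where
  "expansion n I g = mgen n ({m \<in> I. \<not> mdvd g m} \<union> {(\<lambda>k. g k + var j k) | j. maxvar n g \<le> j \<and> j < n})"

text \<open>Hilbert function of S/I for a monomial ideal I: the standard monomials of degree d
  form a k-basis of (S/I)_d.\<close>
definition hilbert_fun :: "nat \<Rightarrow> (nat \<Rightarrow> nat) set \<Rightarrow> nat \<Rightarrow> nat" where
  "hilbert_fun n I d = card {a \<in> monomials n. mdeg n a = d \<and> a \<notin> I}"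

definition hilbert_poly :: "nat \<Rightarrow> (nat \<Rightarrow> nat) set \<Rightarrow> rat poly" where
  "hilbert_poly n I = (THE p. \<forall>\<^sub>F d in sequentially. poly p (of_nat d) = of_nat (hilbert_fun n I d))"

end

theory Submission
  imports Defs
begin

text \<open>For d \<ge> deg g the degree-d standard monomials of the expansion I' are those of I
  together with the single monomial g x_n^(d - deg g). Hilbert functions of monomial ideals
  are eventually polynomial (Dickson's lemma gives finite generation; then induct on the
  number of generators via colon ideals), so the two Hilbert polynomials differ by 1.\<close>

lemma nat_seq_mono_subseq:
  fixes s :: "nat \<Rightarrow> nat"
  obtains r :: "nat \<Rightarrow> nat" where "strict_mono r" "mono (\<lambda>m. s (r m))"
proof -
  obtain f where f: "strict_mono f" "monoseq (\<lambda>m. s (f m))"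
    using seq_monosub[of s] by blast
  show thesis
  proof (cases "mono (\<lambda>m. s (f m))")
    case True
    with f(1) show thesis by (rule that)
  next
    case False
    then have dec: "antimono (\<lambda>m. s (f m))"
      using f(2) by (simp add: monoseq_iff)
    obtain N where N: "\<And>m. s (f N) \<le> s (f m)"
      using ex_has_least_nat[where P = "\<lambda>_. True" and m = "\<lambda>m. s (f m)"] by blast
    have const: "s (f (N + m)) = s (f N)" for m
      using N[of "N + m"] antimonoD[OF dec, of N "N + m"] by simp
    show thesis
    proof (rule that)
      show "strict_mono (\<lambda>m. f (N + m))"
        using f(1) by (simp add: strict_mono_def)
      show "mono (\<lambda>m. s (f (N + m)))"
        using const by (simp add: mono_def)
    qed
  qed
qed

lemma componentwise_mono_subseq:
  fixes s :: "nat \<Rightarrow> nat \<Rightarrow> nat"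
  shows "\<exists>r::nat \<Rightarrow> nat. strict_mono r \<and> (\<forall>i<k. mono (\<lambda>m. s (r m) i))"
proof (induction k)
  case 0
  show ?case by (auto intro: strict_mono_id)
next
  case (Suc k)
  then obtain r :: "nat \<Rightarrow> nat" where r: "strict_mono r" "\<forall>i<k. mono (\<lambda>m. s (r m) i)"
    by blast
  obtain r' :: "nat \<Rightarrow> nat" where r': "strict_mono r'" "mono (\<lambda>m. s (r (r' m)) k)"
    by (rule nat_seq_mono_subseq[of "\<lambda>m. s (r m) k"])
  have "strict_mono (r \<circ> r')"
    using r(1) r'(1) by (simp add: strict_mono_def)
  moreover have "mono (\<lambda>m. s ((r \<circ> r') m) i)" if "i < Suc k" for i
  proof (cases "i = k")
    case True
    then show ?thesis using r'(2) by (simp add: o_def)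
  next
    case False
    with that r(2) have "mono (\<lambda>m. s (r m) i)" by simp
    then show ?thesis
      using strict_mono_mono[OF r'(1)] by (simp add: mono_def)
  qed
  ultimately show ?case by blast
qed

lemma monomial_seq_dvd_pair:
  fixes s :: "nat \<Rightarrow> nat \<Rightarrow> nat"
  assumes "\<And>m. s m \<in> monomials n"
  obtains i j where "i < j" "mdvd (s i) (s j)"
proof -
  obtain r :: "nat \<Rightarrow> nat" where r: "strict_mono r" "\<forall>i<Suc n. mono (\<lambda>m. s (r m) i)"
    using componentwise_mono_subseq by blast
  have "s (r 0) i \<le> s (r 1) i" for i
  proof (cases "i \<le> n")
    case True
    then have "mono (\<lambda>m. s (r m) i)" using r(2) by simp
    then show ?thesis by (rule monoD) simp
  next
    case False
    then show ?thesis using assms[of "r 0"] by (simp add: monomials_def)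
  qed
  then have "mdvd (s (r 0)) (s (r 1))" by (simp add: mdvd_def)
  with strict_monoD[OF r(1), of 0 1] show thesis by (intro that) simp_all
qed

lemma mdvd_refl [simp]: "mdvd a a"
  by (simp add: mdvd_def)

lemma mdvd_trans: "mdvd a b \<Longrightarrow> mdvd b c \<Longrightarrow> mdvd a c"
  unfolding mdvd_def using le_trans by blast

lemma mdeg_less_if_proper_mdvd:
  assumes "a \<in> monomials n" "mdvd b a" "b \<noteq> a"
  shows "mdeg n b < mdeg n a"
proof -
  obtain i where "b i \<noteq> a i" using assms(3) by auto
  moreover have "i \<le> n"
    using calculation assms(1,2) by (auto simp: monomials_def mdvd_def not_le intro: le_antisym)
  ultimately show ?thesis
    using assms(2) unfolding mdeg_def mdvd_def
    by (intro sum_strict_mono_ex1) (auto intro!: bexI[of _ i] le_neq_implies_less)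
qed

lemma min_gens_mdvd:
  assumes "S \<subseteq> monomials n" "a \<in> S"
  shows "\<exists>g\<in>min_gens S. mdvd g a"
  using assms(2)
proof (induction a rule: measure_induct_rule[where f = "mdeg n"])
  case (less a)
  show ?case
  proof (cases "a \<in> min_gens S")
    case False
    then obtain b where b: "b \<in> S" "mdvd b a" "b \<noteq> a"
      using less.prems by (auto simp: min_gens_def)
    then have "mdeg n b < mdeg n a"
      using assms(1) less.prems by (intro mdeg_less_if_proper_mdvd) auto
    then obtain g where "g \<in> min_gens S" "mdvd g b"
      using less.IH b(1) by blast
    with b(2) show ?thesis by (blast intro: mdvd_trans)
  qed (use mdvd_refl in blast)
qed

text \<open>Minimal generators are pairwise incomparable, so an infinite family of them
  would contradict Dickson's lemma.\<close>

lemma finite_min_gens: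
  assumes "S \<subseteq> monomials n"
  shows "finite (min_gens S)"
proof (rule ccontr)
  assume "infinite (min_gens S)"
  then obtain s :: "nat \<Rightarrow> nat \<Rightarrow> nat" where s: "inj s" "range s \<subseteq> min_gens S"
    by (auto simp: infinite_iff_countable_subset)
  have "s m \<in> monomials n" for m
    using s(2) assms by (auto simp: min_gens_def)
  then obtain i j where ij: "i < j" "mdvd (s i) (s j)"
    by (rule monomial_seq_dvd_pair)
  have "s i \<in> min_gens S" "s j \<in> min_gens S"
    using s(2) by auto
  with ij(2) have "s i = s j"
    by (auto simp: min_gens_def)
  with s(1) ij(1) show False
    by (auto dest: injD)
qed

lemma monomial_idealD:
  assumes "monomial_ideal n I" "f \<in> I" "a \<in> monomials n" "mdvd f a"
  shows "a \<in> I"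
proof -
  have "(\<lambda>i. f i + (a i - f i)) \<in> I"
    using assms(1-3) by (auto simp: monomial_ideal_def monomials_def)
  also have "(\<lambda>i. f i + (a i - f i)) = a"
    using assms(4) by (auto simp: mdvd_def fun_eq_iff)
  finally show ?thesis .
qed

lemma mgen_min_gens:
  assumes "monomial_ideal n I"
  shows "mgen n (min_gens I) = I"
proof -
  have "I \<subseteq> monomials n" using assms by (simp add: monomial_ideal_def)
  then show ?thesis
    using min_gens_mdvd[of I n] monomial_idealD[OF assms]
    by (auto simp: mgen_def min_gens_def)
qed

definition monomials_deg :: "nat \<Rightarrow> nat \<Rightarrow> (nat \<Rightarrow> nat) set" where
  "monomials_deg n d = {a \<in> monomials n. mdeg n a = d}"

lemma hilbert_fun_eq_card: "hilbert_fun n I d = card (monomials_deg n d - I)"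
  unfolding hilbert_fun_def monomials_deg_def by (rule arg_cong[where f = card]) auto

lemma mdeg_add: "mdeg n (\<lambda>i. a i + b i) = mdeg n a + mdeg n b"
  unfolding mdeg_def by (simp add: sum.distrib)

lemma add_in_monomials [simp]:
  "(\<lambda>i. a i + b i) \<in> monomials n \<longleftrightarrow> a \<in> monomials n \<and> b \<in> monomials n"
  by (auto simp: monomials_def)

lemma finite_monomials_deg: "finite (monomials_deg n d)"
proof (rule finite_subset)
  show "monomials_deg n d \<subseteq> {a. \<forall>i. (i \<in> {..n} \<longrightarrow> a i \<in> {..d}) \<and> (i \<notin> {..n} \<longrightarrow> a i = 0)}"
  proof safe
    fix a i assume "a \<in> monomials_deg n d" "i \<le> n"
    then show "a i \<le> d"
      using member_le_sum[of i "{..n}" a] by (simp add: monomials_deg_def mdeg_def)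
  qed (auto simp: monomials_deg_def monomials_def, metis leI less_irrefl)
  show "finite {a :: nat \<Rightarrow> nat. \<forall>i. (i \<in> {..n} \<longrightarrow> a i \<in> {..d}) \<and> (i \<notin> {..n} \<longrightarrow> a i = 0)}"
    by (rule finite_set_of_finite_funs) auto
qed

lemma monomials_deg_Suc:
  "monomials_deg (Suc n) d = (\<Union>k\<le>d. (\<lambda>b. b(Suc n := k)) ` monomials_deg n (d - k))"
proof (intro equalityI subsetI)
  fix a assume a: "a \<in> monomials_deg (Suc n) d"
  have "mdeg (Suc n) a = mdeg n (a(Suc n := 0)) + a (Suc n)"
    by (simp add: mdeg_def)
  moreover have "a(Suc n := 0) \<in> monomials n"
    using a by (auto simp: monomials_deg_def monomials_def)
  ultimately show "a \<in> (\<Union>k\<le>d. (\<lambda>b. b(Suc n := k)) ` monomials_deg n (d - k))"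
    using a by (auto simp: monomials_deg_def intro!: bexI[of _ "a (Suc n)"] image_eqI[of _ _ "a(Suc n := 0)"])
next
  fix a assume "a \<in> (\<Union>k\<le>d. (\<lambda>b. b(Suc n := k)) ` monomials_deg n (d - k))"
  then obtain k b where kb: "k \<le> d" "b \<in> monomials_deg n (d - k)" "a = b(Suc n := k)"
    by auto
  then have "mdeg (Suc n) a = mdeg n b + k"
    by (simp add: mdeg_def monomials_deg_def monomials_def)
  with kb show "a \<in> monomials_deg (Suc n) d"
    by (auto simp: monomials_deg_def monomials_def)
qed

lemma card_monomials_deg: "card (monomials_deg n d) = (d + n) choose n"
proof (induction n arbitrary: d)
  case 0
  have "monomials_deg 0 d = {(\<lambda>i. if i = 0 then d else 0)}"
    by (auto simp: monomials_deg_def monomials_def mdeg_def)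
  then show ?case by simp
next
  case (Suc n)
  have inj: "inj_on (\<lambda>b. b(Suc n := k)) (monomials_deg n e)" for k e
    by (rule inj_onI) (auto simp: monomials_deg_def monomials_def fun_eq_iff, metis lessI)
  have "card (monomials_deg (Suc n) d) = (\<Sum>k\<le>d. card (monomials_deg n (d - k)))"
    unfolding monomials_deg_Suc
    by (subst card_UN_disjoint) (auto simp: finite_monomials_deg card_image[OF inj], metis fun_upd_same)
  also have "\<dots> = (\<Sum>k\<le>d. (n + k) choose k)"
    using Suc.IH binomial_symmetric[of n "n + _"]
    by (subst sum.atLeastAtMost_rev[of _ 0 d, simplified atLeast0AtMost])
       (simp add: add.commute)
  also have "\<dots> = (d + Suc n) choose Suc n"
    using sum_choose_lower[of n d] binomial_symmetric[of d "Suc (n + d)"]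
    by (simp add: add.commute)
  finally show ?case .
qed

definition eventually_poly :: "(nat \<Rightarrow> rat) \<Rightarrow> bool" where
  "eventually_poly f \<longleftrightarrow> (\<exists>p. \<forall>\<^sub>F d in sequentially. poly p (of_nat d) = f d)"

lemma eventually_poly_binomial: "eventually_poly (\<lambda>d. of_nat ((d + n) choose n))"
proof -
  define p :: "rat poly" where "p = smult (1 / fact n) (\<Prod>i<n. [:of_nat i + 1, 1:])"
  have "poly p (of_nat d) = of_nat ((d + n) choose n)" for d
  proof -
    have "(of_nat ((d + n) choose n) :: rat) = pochhammer (of_nat d + 1) n / fact n"
      by (simp add: binomial_gbinomial gbinomial_pochhammer')
    also have "\<dots> = poly p (of_nat d)"
      by (simp add: p_def poly_prod pochhammer_prod atLeast0LessThan algebra_simps)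
    finally show ?thesis by simp
  qed
  then show ?thesis
    unfolding eventually_poly_def by (intro exI[of _ p] always_eventually) simp
qed

lemma eventually_poly_diff:
  assumes "eventually_poly f" "eventually_poly g"
  shows "eventually_poly (\<lambda>d. f d - g d)"
proof -
  obtain p q where "\<forall>\<^sub>F d in sequentially. poly p (of_nat d) = f d"
    "\<forall>\<^sub>F d in sequentially. poly q (of_nat d) = g d"
    using assms unfolding eventually_poly_def by blast
  then have "\<forall>\<^sub>F d in sequentially. poly (p - q) (of_nat d) = f d - g d"
    by eventually_elim simp
  then show ?thesis unfolding eventually_poly_def by blast
qed

lemma eventually_poly_cong:
  assumes "eventually_poly f" "\<forall>\<^sub>F d in sequentially. f d = g d"
  shows "eventually_poly g"
proof -
  obtain p where "\<forall>\<^sub>F d in sequentially. poly p (of_nat d) = f d"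
    using assms(1) unfolding eventually_poly_def by blast
  with assms(2) have "\<forall>\<^sub>F d in sequentially. poly p (of_nat d) = g d"
    by eventually_elim simp
  then show ?thesis unfolding eventually_poly_def by blast
qed

lemma eventually_poly_shift:
  assumes "eventually_poly f"
  shows "eventually_poly (\<lambda>d. f (d - c))"
proof -
  obtain p N where p: "\<And>d. d \<ge> N \<Longrightarrow> poly p (of_nat d) = f d"
    using assms unfolding eventually_poly_def eventually_sequentially by blast
  have "poly (pcompose p [:- of_nat c, 1:]) (of_nat d) = f (d - c)" if "d \<ge> N + c" for d
    using that p[of "d - c"] by (simp add: poly_pcompose)
  then show ?thesis
    unfolding eventually_poly_def eventually_sequentially by blast
qed

text \<open>Generators of the colon ideal (mgen n F : f); h i - f i is truncated subtraction,
  so the generators are h / gcd(h, f).\<close>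

definition colon_gens :: "(nat \<Rightarrow> nat) \<Rightarrow> (nat \<Rightarrow> nat) set \<Rightarrow> (nat \<Rightarrow> nat) set" where
  "colon_gens f F = (\<lambda>h i. h i - f i) ` F"

lemma add_in_mgen_iff:
  assumes "f \<in> monomials n" "u \<in> monomials n"
  shows "(\<lambda>i. f i + u i) \<in> mgen n F \<longleftrightarrow> u \<in> mgen n (colon_gens f F)"
proof -
  have "mdvd h (\<lambda>i. f i + u i) \<longleftrightarrow> mdvd (\<lambda>i. h i - f i) u" for h
    by (simp add: mdvd_def le_diff_conv add.commute)
  then show ?thesis
    using assms by (auto simp: mgen_def colon_gens_def)
qed

text \<open>Standard-monomial form of the exact sequence
  0 \<rightarrow> S/(F : f)(-deg f) \<rightarrow> S/F \<rightarrow> S/(F + f) \<rightarrow> 0.\<close>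

lemma hilbert_fun_mgen_insert:
  assumes f: "f \<in> monomials n" and d: "mdeg n f \<le> d"
  shows "hilbert_fun n (mgen n (insert f F)) d + hilbert_fun n (mgen n (colon_gens f F)) (d - mdeg n f)
    = hilbert_fun n (mgen n F) d"
proof -
  let ?mul = "\<lambda>u i. f i + u i"
  define E where "E = monomials_deg n (d - mdeg n f) - mgen n (colon_gens f F)"
  have split: "monomials_deg n d - mgen n F = (monomials_deg n d - mgen n (insert f F)) \<union> ?mul ` E"
  proof (intro equalityI subsetI)
    fix a assume a: "a \<in> monomials_deg n d - mgen n F"
    show "a \<in> (monomials_deg n d - mgen n (insert f F)) \<union> ?mul ` E"
    proof (cases "mdvd f a")
      case True
      define u where "u = (\<lambda>i. a i - f i)"
      have au: "a = ?mul u"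
        using True by (auto simp: u_def mdvd_def fun_eq_iff)
      moreover have "u \<in> E"
        using a au mdeg_add[of n f u] add_in_mgen_iff[OF f, of u F]
        by (auto simp: E_def monomials_deg_def)
      ultimately show ?thesis by blast
    qed (use a in \<open>auto simp: mgen_def\<close>)
  next
    fix a assume "a \<in> (monomials_deg n d - mgen n (insert f F)) \<union> ?mul ` E"
    then show "a \<in> monomials_deg n d - mgen n F"
      using f d mdeg_add[of n f] add_in_mgen_iff[OF f]
      by (auto simp: E_def mgen_def monomials_deg_def)
  qed
  have disjoint: "(monomials_deg n d - mgen n (insert f F)) \<inter> ?mul ` E = {}"
    using f by (auto simp: E_def mgen_def monomials_deg_def mdvd_def)
  have "inj_on ?mul E"
    by (rule inj_onI) (simp add: fun_eq_iff)
  then have "card (?mul ` E) = hilbert_fun n (mgen n (colon_gens f F)) (d - mdeg n f)"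
    by (simp add: card_image E_def hilbert_fun_eq_card)
  moreover have "card (monomials_deg n d - mgen n F)
      = card (monomials_deg n d - mgen n (insert f F)) + card (?mul ` E)"
    unfolding split
    by (rule card_Un_disjoint[OF _ _ disjoint]) (simp_all add: finite_monomials_deg E_def)
  ultimately show ?thesis
    by (simp add: hilbert_fun_eq_card)
qed

lemma eventually_poly_hilbert_fun_mgen:
  assumes "finite F" "F \<subseteq> monomials n"
  shows "eventually_poly (\<lambda>d. of_nat (hilbert_fun n (mgen n F) d))"
  using assms
proof (induction "card F" arbitrary: F rule: less_induct)
  case less
  show ?case
  proof (cases "F = {}")
    case True
    then show ?thesis
      using eventually_poly_binomial[of n]
      by (simp add: mgen_def hilbert_fun_eq_card card_monomials_deg)
  next
    case False
    then obtain f F0 where F: "F = insert f F0" "f \<notin> F0"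
      by (metis ex_in_conv insert_Diff Diff_iff singletonI)
    have f: "f \<in> monomials n" and F0: "finite F0" "F0 \<subseteq> monomials n"
      using less.prems F by auto
    have card: "card F0 < card F" "card (colon_gens f F0) < card F"
      using F F0 card_image_le[OF F0(1), of "\<lambda>h i. h i - f i"]
      by (auto simp: colon_gens_def)
    have "colon_gens f F0 \<subseteq> monomials n"
      using F0(2) by (auto simp: colon_gens_def monomials_def)
    then have "eventually_poly (\<lambda>d. of_nat (hilbert_fun n (mgen n F0) d)
        - of_nat (hilbert_fun n (mgen n (colon_gens f F0)) (d - mdeg n f)))"
      using less.hyps card F0 finite_imageI[OF F0(1)]
      by (intro eventually_poly_diff eventually_poly_shift) (auto simp: colon_gens_def)
    moreover have "\<forall>\<^sub>F d in sequentially.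
        of_nat (hilbert_fun n (mgen n F0) d) - of_nat (hilbert_fun n (mgen n (colon_gens f F0)) (d - mdeg n f))
        = (of_nat (hilbert_fun n (mgen n F) d) :: rat)"
      using eventually_ge_at_top[of "mdeg n f"]
    proof eventually_elim
      case (elim d)
      show ?case
        using hilbert_fun_mgen_insert[OF f elim, of F0] F(1)
        by (simp flip: of_nat_add)
    qed
    ultimately show ?thesis
      by (rule eventually_poly_cong)
  qed
qed

lemma eventually_poly_hilbert_fun:
  assumes "monomial_ideal n I"
  shows "eventually_poly (\<lambda>d. of_nat (hilbert_fun n I d))"
proof -
  have "I \<subseteq> monomials n"
    using assms by (simp add: monomial_ideal_def)
  then have "eventually_poly (\<lambda>d. of_nat (hilbert_fun n (mgen n (min_gens I)) d))"
    by (intro eventually_poly_hilbert_fun_mgen finite_min_gens) (auto simp: min_gens_def)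
  then show ?thesis
    by (simp add: mgen_min_gens[OF assms])
qed

lemma poly_eq_if_eventually_eq_on_nat:
  fixes p q :: "'a::{field_char_0} poly"
  assumes "\<forall>\<^sub>F d in sequentially. poly p (of_nat d) = poly q (of_nat d)"
  shows "p = q"
proof (rule ccontr)
  assume "p \<noteq> q"
  then have "finite {x. poly (p - q) x = 0}"
    by (intro poly_roots_finite) simp
  moreover obtain N where "\<And>d. d \<ge> N \<Longrightarrow> poly (p - q) (of_nat d) = 0"
    using assms by (auto simp: eventually_sequentially)
  then have "of_nat ` {N..} \<subseteq> {x. poly (p - q) x = 0}"
    by auto
  ultimately have "finite (of_nat ` {N..} :: 'a set)"
    by (rule finite_subset[rotated])
  then show False
    using infinite_Ici[of N] by (auto dest: finite_imageD simp: inj_on_def)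
qed

lemma hilbert_poly_eqI:
  fixes p :: "rat poly"
  assumes "\<forall>\<^sub>F d in sequentially. poly p (of_nat d) = of_nat (hilbert_fun n I d)"
  shows "hilbert_poly n I = p"
  unfolding hilbert_poly_def
proof (rule the_equality)
  fix q :: "rat poly"
  assume "\<forall>\<^sub>F d in sequentially. poly q (of_nat d) = of_nat (hilbert_fun n I d)"
  with assms have "\<forall>\<^sub>F d in sequentially. poly q (of_nat d) = poly p (of_nat d)"
    by eventually_elim simp
  then show "q = p"
    by (rule poly_eq_if_eventually_eq_on_nat)
qed (rule assms)

lemma var_in_monomials: "i \<le> n \<Longrightarrow> var i \<in> monomials n"
  by (simp add: var_def monomials_def)

lemma mdeg_smult_var: "i \<le> n \<Longrightarrow> mdeg n (\<lambda>k. c * var i k) = c"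
  by (simp add: mdeg_def var_def if_distrib cong: if_cong)

lemma maxvar_le: "maxvar n g \<le> n"
  and maxvar_pos: "0 < maxvar n g \<Longrightarrow> 0 < g (maxvar n g)"
proof -
  have "finite ({j. j \<le> n \<and> 0 < g j} \<union> {0})"
    by (rule finite_subset[of _ "{..n}"]) auto
  then have "maxvar n g \<in> {j. j \<le> n \<and> 0 < g j} \<union> {0}"
    unfolding maxvar_def by (rule Max_in) simp
  then show "maxvar n g \<le> n" "0 < maxvar n g \<Longrightarrow> 0 < g (maxvar n g)"
    by auto
qed

lemma mdvd_add_var:
  assumes "mdvd g a" "g i < a i"
  shows "mdvd (\<lambda>k. g k + var i k) a"
  unfolding mdvd_def
proof
  fix k
  show "g k + var i k \<le> a k"
    using assms by (cases "k = i") (auto simp: mdvd_def var_def)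
qed

lemma mdvd_borel_move:
  assumes "mdvd g a" "g i < a i" "i < m"
  shows "mdvd (\<lambda>k. g k - var m k + var i k) a"
  unfolding mdvd_def
proof
  fix k
  have "g k \<le> a k" using assms(1) by (simp add: mdvd_def)
  then show "g k - var m k + var i k \<le> a k"
    using assms(2,3) by (cases "k = i") (auto simp: var_def)
qed

lemma not_mdvd_borel_move:
  assumes "i < m" "0 < g m"
  shows "\<not> mdvd g (\<lambda>k. g k - var m k + var i k)"
proof
  assume "mdvd g (\<lambda>k. g k - var m k + var i k)"
  then have "g m \<le> g m - var m m + var i m" by (simp add: mdvd_def)
  with assms show False by (simp add: var_def)
qed

text \<open>The x_n factors are traded one at a time, each by a Borel move x_n \<mapsto> x_i.\<close>

lemma borel_trade_last_var:
  assumes I: "borel n I" and m: "m \<in> I"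
    and "t \<le> m n" "u \<in> monomials n" "mdeg n u = t"
  shows "(\<lambda>k. (m(n := m n - t)) k + u k) \<in> I"
  using assms(3-)
proof (induction t arbitrary: u)
  case 0
  then have "u = (\<lambda>k. 0)"
    by (auto simp: mdeg_def monomials_def fun_eq_iff) (metis atMost_iff not_le)
  with m show ?case by simp
next
  case (Suc t)
  obtain i where i: "i \<le> n" "0 < u i"
    using Suc.prems(3) sum_eq_0_iff[of "{..n}" u] by (force simp: mdeg_def)
  define u' where "u' = u(i := u i - 1)"
  have u: "u = (\<lambda>k. u' k + var i k)"
    using i by (auto simp: u'_def var_def fun_eq_iff)
  have "mdeg n u = mdeg n u' + mdeg n (var i)"
    by (subst u) (rule mdeg_add)
  then have u': "u' \<in> monomials n" "mdeg n u' = t"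
    using Suc.prems mdeg_smult_var[OF i(1), of 1] by (auto simp: u'_def monomials_def)
  define m' where "m' = (\<lambda>k. (m(n := m n - t)) k + u' k)"
  have m': "m' \<in> I" "0 < m' n"
    using Suc.IH[OF _ u'] Suc.prems(1) by (auto simp: m'_def)
  show ?case
  proof (cases "i = n")
    case True
    have "(\<lambda>k. (m(n := m n - Suc t)) k + u k) = m'"
      using Suc.prems(1) True i(2) by (auto simp: m'_def u'_def fun_eq_iff)
    with m' show ?thesis by simp
  next
    case False
    have "(\<lambda>k. m' k - var n k + var i k) \<in> I"
      using I m' i(1) False unfolding borel_def by simp
    also have "(\<lambda>k. m' k - var n k + var i k) = (\<lambda>k. (m(n := m n - Suc t)) k + u k)"
      using Suc.prems(1) False by (auto simp: m'_def u var_def fun_eq_iff)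
    finally show ?thesis .
  qed
qed

lemma borel_saturated_clear_last_var:
  assumes "monomial_ideal n I" "borel n I" "saturated n I" "m \<in> I"
  shows "m(n := 0) \<in> I"
proof -
  have "m \<in> monomials n"
    using assms(1,4) by (auto simp: monomial_ideal_def)
  then have "m(n := 0) \<in> monomials n"
    by (simp add: monomials_def)
  moreover have "(\<lambda>k. (m(n := 0)) k + u k) \<in> I" if "u \<in> monomials n" "mdeg n u = m n" for u
    using borel_trade_last_var[OF assms(2,4) order_refl that] by simp
  ultimately show ?thesis
    using assms(3) unfolding saturated_def by blast
qed

lemma expansion_subset:
  assumes I: "monomial_ideal n I" and g: "g \<in> I"
  shows "expansion n I g \<subseteq> I"
proof -
  have "(\<lambda>k. g k + var j k) \<in> I" if "j < n" for j
    using I g var_in_monomials[of j n] that by (simp add: monomial_ideal_def)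
  then show ?thesis
    using monomial_idealD[OF I] by (auto simp: expansion_def mgen_def)
qed

text \<open>A generator of the first kind dividing g x_n^k would, after saturation strips
  its x_n part, be a divisor of g in I, hence g itself; generators of the second
  kind g x_j have j < n.\<close>

lemma mult_last_var_notin_expansion:
  assumes I: "monomial_ideal n I" "borel n I" "saturated n I" and g: "g \<in> min_gens I"
  shows "(\<lambda>i. g i + k * var n i) \<notin> expansion n I g"
proof
  let ?a = "\<lambda>i. g i + k * var n i"
  assume "?a \<in> expansion n I g"
  then obtain s where s: "s \<in> {m \<in> I. \<not> mdvd g m} \<union> {(\<lambda>k. g k + var j k) | j. maxvar n g \<le> j \<and> j < n}"
    "mdvd s ?a"
    by (auto simp: expansion_def mgen_def)
  show False
  proof (cases "s \<in> I \<and> \<not> mdvd g s")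
    case True
    then have "s(n := 0) \<in> I"
      using borel_saturated_clear_last_var[OF I] by blast
    moreover have "mdvd (s(n := 0)) g"
      using s(2) by (auto simp: mdvd_def var_def split: if_splits)
    ultimately have "s(n := 0) = g"
      using g by (auto simp: min_gens_def)
    then have "mdvd g s"
      by (auto simp: mdvd_def)
    with True show False by simp
  next
    case False
    then obtain j where "j < n" "s = (\<lambda>k. g k + var j k)"
      using s(1) by auto
    with s(2) show False
      by (auto simp: mdvd_def var_def dest: spec[of _ j])
  qed
qed

text \<open>A monomial of I outside the expansion is divisible by g (else it is a generator)
  and can exceed g only in x_n: an excess in x_i with i \<ge> max g is caught by the
  generator g x_i, and one with i < max g by the Borel move g x_i / x_(max g), which
  lies in I but is not divisible by g.\<close>

lemma in_ideal_notin_expansion: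
  assumes I: "monomial_ideal n I" "borel n I" and g: "g \<in> I"
    and a: "a \<in> monomials n" "a \<in> I" "a \<notin> expansion n I g"
  shows "a = (\<lambda>i. g i + (a n - g n) * var n i)"
proof -
  have no_gen: "\<not> mdvd b a" if "b \<in> I" "\<not> mdvd g b \<or> (\<exists>j. b = (\<lambda>k. g k + var j k) \<and> maxvar n g \<le> j \<and> j < n)" for b
    using a that by (auto simp: expansion_def mgen_def)
  have ga: "mdvd g a"
    using no_gen[of a] a(2) by auto
  have eq: "a i = g i" if "i \<noteq> n" for i
  proof (rule ccontr)
    assume "a i \<noteq> g i"
    then have gt: "g i < a i"
      using ga by (simp add: mdvd_def le_neq_implies_less)
    have "i < n"
    proof (rule ccontr)
      assume "\<not> i < n"
      with a(1) \<open>i \<noteq> n\<close> have "a i = 0" by (simp add: monomials_def)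
      with gt show False by simp
    qed
    show False
    proof (cases "maxvar n g \<le> i")
      case True
      have "(\<lambda>k. g k + var i k) \<in> I"
        using I(1) g var_in_monomials[of i n] \<open>i < n\<close> by (simp add: monomial_ideal_def)
      moreover have "mdvd (\<lambda>k. g k + var i k) a"
        using ga gt by (rule mdvd_add_var)
      ultimately show False
        using no_gen[of "\<lambda>k. g k + var i k"] True \<open>i < n\<close> by blast
    next
      case False
      define m where "m = maxvar n g"
      have m: "i < m" "m \<le> n" "0 < g m"
        using False maxvar_le[of n g] maxvar_pos[of n g] by (auto simp: m_def)
      define b where "b = (\<lambda>k. g k - var m k + var i k)"
      have "b \<in> I"
        using I(2) g m unfolding borel_def b_def by blast
      moreover have "\<not> mdvd g b"
        unfolding b_def using m(1,3) by (rule not_mdvd_borel_move)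
      moreover have "mdvd b a"
        unfolding b_def using ga gt m(1) by (rule mdvd_borel_move)
      ultimately show False
        using no_gen[of b] by blast
    qed
  qed
  show ?thesis
  proof
    fix k
    show "a k = g k + (a n - g n) * var n k"
      using eq[of k] ga by (cases "k = n") (auto simp: var_def mdvd_def dest: spec[of _ n])
  qed
qed

lemma hilbert_fun_expansion:
  assumes I: "monomial_ideal n I" "borel n I" "saturated n I"
    and g: "g \<in> min_gens I" and d: "mdeg n g \<le> d"
  shows "hilbert_fun n (expansion n I g) d = Suc (hilbert_fun n I d)"
proof -
  define a0 where "a0 = (\<lambda>i. g i + (d - mdeg n g) * var n i)"
  have gI: "g \<in> I" and "g \<in> monomials n"
    using g I(1) by (auto simp: min_gens_def monomial_ideal_def)
  then have a0: "a0 \<in> monomials_deg n d" "a0 \<in> I"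
    using I(1) d mdeg_add[of n g] mdeg_smult_var[of n n]
    by (auto simp: a0_def monomials_deg_def monomial_ideal_def monomials_def var_def)
  have "a0 \<notin> expansion n I g"
    unfolding a0_def by (rule mult_last_var_notin_expansion[OF I g])
  moreover have "a = a0" if "a \<in> monomials_deg n d" "a \<in> I" "a \<notin> expansion n I g" for a
  proof -
    define k where "k = a n - g n"
    have a: "a = (\<lambda>i. g i + k * var n i)"
      unfolding k_def using in_ideal_notin_expansion[OF I(1,2) gI] that
      by (simp add: monomials_deg_def)
    then have "mdeg n a = mdeg n g + k"
      using mdeg_add[of n g] mdeg_smult_var[of n n] by simp
    with that(1) a show ?thesis
      by (simp add: a0_def monomials_deg_def)
  qed
  ultimately have "monomials_deg n d - expansion n I g = insert a0 (monomials_deg n d - I)"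
    using a0 expansion_subset[OF I(1) gI] by blast
  then show ?thesis
    using a0(2) by (simp add: hilbert_fun_eq_card finite_monomials_deg)
qed

theorem lemma5p5:
  fixes n :: nat and I :: "(nat \<Rightarrow> nat) set" and g :: "nat \<Rightarrow> nat"
  assumes "monomial_ideal n I" and "borel n I" and "saturated n I"
    and "expandable n I g"
  shows "hilbert_poly n (expansion n I g) = 1 + hilbert_poly n I"
proof -
  have g: "g \<in> min_gens I"
    using assms(4) by (simp add: expandable_def)
  obtain p :: "rat poly" where p: "\<forall>\<^sub>F d in sequentially. poly p (of_nat d) = of_nat (hilbert_fun n I d)"
    using eventually_poly_hilbert_fun[OF assms(1)] unfolding eventually_poly_def by blast
  have "\<forall>\<^sub>F d in sequentially. poly (1 + p) (of_nat d) = of_nat (hilbert_fun n (expansion n I g) d)"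
    using p eventually_ge_at_top[of "mdeg n g"]
    by eventually_elim (simp add: hilbert_fun_expansion[OF assms(1-3) g])
  then show ?thesis
    using hilbert_poly_eqI[OF p] hilbert_poly_eqI by simp
qed

end
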